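(* Let $n\geq2$ and let $A=(a_{i,j})$ be a nonnegative $2\times n$ matrix with $a_{2,k}=0$ for $2\leq k\leq n$. Let $A'=(a'_{i,j})$ be the $2\times n$ matrix with $a'_{1,1}=\sum_{k=1}^n a_{1,k}$, $a'_{1,k}=0$ for $2\le k\le n$, $a'_{2,1}=a_{2,1}-\sum_{k=2}^n a_{1,k}$, and $a'_{2,k}=a_{1,k}$ for $2\leq k\leq n$. If $\sum_{k=2}^n a_{1,k}\leq a_{2,1}\leq\sum_{k=1}^n a_{1,k}$, then $H(A)\geq H(A')$.
   Context: For a nonnegative matrix $A$, $H(A)=-\sum_{i,j}a_{i,j}\log a_{i,j}$ with the convention $0\log0=0$. *)

theory Defs
  imports Complex_Main
begin

definition xlogx :: "real \<Rightarrow> real" where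
  "xlogx x = (if x = 0 then 0 else x * ln x)"

definition H :: "nat \<Rightarrow> nat \<Rightarrow> (nat \<Rightarrow> nat \<Rightarrow> real) \<Rightarrow> real" where
  "H m n a = - (\<Sum>i\<in>{1..m}. \<Sum>j\<in>{1..n}. xlogx (a i j))"

end

(* The move from A to A' leaves the columns 2..n unchanged as multisets of entries, and in the
   first column it replaces the pair (a11, a21) by (a11 + s, a21 - s), s = a12 + ... + a1n, which
   has the same sum and spreads further apart: a21 - s <= a11, a21 <= a11 + s. Since x log x is
   convex on [0, oo), pushing two points with fixed sum apart can only increase
   f(x) + f(y), so the entropy can only decrease. *)

theory Submission
  imports Defs "HOL-Analysis.Analysis"
begin

lemma xlogx_0 [simp]: "xlogx 0 = 0"
  by (simp add: xlogx_def)

lemma convex_on_xlogx: "convex_on {0..} xlogx"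
proof (rule convex_on_linorderI)
  have convex_pos: "convex_on {0<..} (\<lambda>x::real. x * ln x)"
    by (rule convex_on_realI[where f' = "\<lambda>x. ln x + 1"]) (auto intro!: derivative_eq_intros)
  fix t x y :: real
  assume t: "0 < t" "t < 1" and xy: "x \<in> {0..}" "y \<in> {0..}" "x < y"
  show "xlogx ((1 - t) *\<^sub>R x + t *\<^sub>R y) \<le> (1 - t) * xlogx x + t * xlogx y"
  proof (cases "x = 0")
    \<comment> \<open>x ln x has no derivative at 0, so the endpoint is treated directly\<close>
    case True
    have "t * y * ln (t * y) \<le> t * y * ln y"
      using t xy True by (intro mult_left_mono) auto
    then show ?thesis
      using True by (simp add: xlogx_def)
  next
    case False
    have "0 < (1 - t) * x + t * y"
      using t xy False by (intro add_pos_pos) auto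
    then show ?thesis
      using convex_onD[OF convex_pos, of t x y] t xy False by (simp add: xlogx_def)
  qed
qed simp

lemma convex_on_sum_le_endpoints:
  fixes f :: "real \<Rightarrow> real"
  assumes f: "convex_on {u..v} f" and p: "p \<in> {u..v}" and pq: "p + q = u + v"
  shows "f p + f q \<le> f u + f v"
proof (cases "u < v")
  case True
  define slope where "slope = (f v - f u) / (v - u)"
  have q: "q \<in> {u..v}"
    using p pq by auto
  have "f p + f q \<le> (slope * (p - u) + f u) + (slope * (q - u) + f u)"
    using convex_onD_Icc'[OF f p] convex_onD_Icc'[OF f q] by (simp add: slope_def)
  also have "\<dots> = slope * ((p - u) + (q - u)) + 2 * f u"
    by (simp add: algebra_simps)
  also have "\<dots> = f u + f v"
    using True pq by (simp add: slope_def)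
  finally show ?thesis .
next
  case False
  then have "p = u" "q = v"
    using p pq by auto
  then show ?thesis
    by simp
qed

lemma H_two_rows:
  assumes "n \<ge> 1"
  shows "H 2 n b = - (xlogx (b 1 1) + xlogx (b 2 1) + (\<Sum>j\<in>{2..n}. xlogx (b 1 j) + xlogx (b 2 j)))"
proof -
  have "{1..n} = insert 1 {2..n}" "{1..2::nat} = {1, 2}"
    using assms by auto
  then show ?thesis
    unfolding H_def by (simp add: sum.distrib)
qed

theorem lemma2p1:
  fixes n :: nat and a a' :: "nat \<Rightarrow> nat \<Rightarrow> real"
  assumes hn: "n \<ge> 2"
    and nonneg: "\<And>i j. i \<in> {1..2} \<Longrightarrow> j \<in> {1..n} \<Longrightarrow> a i j \<ge> 0"
    and zero2: "\<And>k. k \<in> {2..n} \<Longrightarrow> a 2 k = 0"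
    and a'11: "a' 1 1 = (\<Sum>k\<in>{1..n}. a 1 k)"
    and a'1k: "\<And>k. k \<in> {2..n} \<Longrightarrow> a' 1 k = 0"
    and a'21: "a' 2 1 = a 2 1 - (\<Sum>k\<in>{2..n}. a 1 k)"
    and a'2k: "\<And>k. k \<in> {2..n} \<Longrightarrow> a' 2 k = a 1 k"
    and lo: "(\<Sum>k\<in>{2..n}. a 1 k) \<le> a 2 1"
    and hi: "a 2 1 \<le> (\<Sum>k\<in>{1..n}. a 1 k)"
  shows "H 2 n a \<ge> H 2 n a'"
proof -
  define s where "s = (\<Sum>k\<in>{2..n}. a 1 k)"
  have s_nonneg: "0 \<le> s"
    unfolding s_def by (rule sum_nonneg) (use nonneg in auto)
  have a'11_eq: "a' 1 1 = a 1 1 + s"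
    using hn unfolding a'11 s_def by (simp add: sum.atLeast_Suc_atMost numeral_2_eq_2)
  have first_column: "xlogx (a 1 1) + xlogx (a 2 1) \<le> xlogx (a' 1 1) + xlogx (a' 2 1)"
  proof -
    have "convex_on {a' 2 1..a' 1 1} xlogx"
      by (rule convex_on_subset[OF convex_on_xlogx]) (use lo a'21 s_def in auto)
    moreover have "a 1 1 \<in> {a' 2 1..a' 1 1}"
      using hi a'11 a'11_eq a'21 s_def s_nonneg by auto
    moreover have "a 1 1 + a 2 1 = a' 2 1 + a' 1 1"
      using a'11_eq a'21 s_def by simp
    ultimately show ?thesis
      using convex_on_sum_le_endpoints by fastforce
  qed
  have other_columns: "(\<Sum>j\<in>{2..n}. xlogx (a' 1 j) + xlogx (a' 2 j))
      = (\<Sum>j\<in>{2..n}. xlogx (a 1 j) + xlogx (a 2 j))"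
    using a'1k a'2k zero2 by simp
  show ?thesis
    using hn first_column other_columns by (simp add: H_two_rows)
qed

end
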